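(* Let $X$ be a connected topological space and let $E$ be a $B_1$-retract of $X$. Then $E$ (with the subspace topology) is connected.
   Context: A function $f:X\to Y$ between topological spaces is a Baire-one function if it is the pointwise limit of a sequence of continuous functions $f_n:X\to Y$. A subset $E$ of $X$ (with the subspace topology) is a $B_1$-retract of $X$ if there exists a Baire-one function $r:X\to E$ with $r(x)=x$ for all $x\in E$. *)

theory Defs
  imports "HOL-Analysis.Analysis"
begin

definition baire_one :: "'a topology \<Rightarrow> 'b topology \<Rightarrow> ('a \<Rightarrow> 'b) \<Rightarrow> bool" where
  "baire_one X Y f \<longleftrightarrow>
     f \<in> topspace X \<rightarrow> topspace Y \<and>
     (\<exists>fs :: nat \<Rightarrow> 'a \<Rightarrow> 'b. (\<forall>n. continuous_map X Y (fs n)) \<and>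
        (\<forall>x\<in>topspace X. limitin Y (\<lambda>n. fs n x) (f x) sequentially))"

definition B1_retract :: "'a topology \<Rightarrow> 'a set \<Rightarrow> bool" where
  "B1_retract X E \<longleftrightarrow> E \<subseteq> topspace X \<and>
     (\<exists>r. baire_one X (subtopology X E) r \<and> (\<forall>x\<in>E. r x = x))"

end

theory Submission
  imports Defs
begin

(*
  The argument shows more generally that the image of a connected space under
  a Baire-one map is connected.  Suppose f is the pointwise limit of continuous
  maps f_n from a connected space X onto Y, and Y is split by disjoint nonempty
  open sets U, V.  Each continuous image f_n(X) is connected, hence lies
  entirely in U or entirely in V.  Choosing x, y with f x in U and f y in V,
  convergence forces f_n x in U and f_n y in V for some common large n, which
  contradicts the previous sentence.

  A B1-retraction r : X -> E fixes E, so it maps X onto E; the theorem is the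
  special case of the general lemma with Y the subspace E.
*)

lemma connected_image_in_one_part:
  assumes "connected_space X" and "continuous_map X Y g"
    and "openin Y U" and "openin Y V" and "U \<inter> V = {}"
    and "topspace Y \<subseteq> U \<union> V"
  shows "g ` topspace X \<subseteq> U \<or> g ` topspace X \<subseteq> V"
proof -
  have "connectedin Y (g ` topspace X)"
    using assms(1,2) connectedin_continuous_map_image connectedin_topspace by blast
  moreover have "separatedin Y U V"
    using separatedin_open_sets[OF assms(3,4)] assms(5) by (simp add: disjnt_def)
  moreover have "g ` topspace X \<subseteq> U \<union> V"
    using assms(2,6) continuous_map_image_subset_topspace by blast
  ultimately show ?thesis
    using connectedin_subset_separated_union by blast
qed

lemma baire_one_image_connected:
  assumes conn: "connected_space X" and f: "baire_one X Y f"
    and onto: "topspace Y \<subseteq> f ` topspace X"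
  shows "connected_space Y"
proof (rule ccontr)
  assume "\<not> connected_space Y"
  then obtain U V where U: "openin Y U" and V: "openin Y V"
    and cover: "topspace Y \<subseteq> U \<union> V" and disj: "U \<inter> V = {}"
    and "U \<noteq> {}" "V \<noteq> {}"
    unfolding connected_space_def by blast
  then obtain u v where "u \<in> U" "v \<in> V"
    by blast
  then have "u \<in> f ` topspace X" "v \<in> f ` topspace X"
    using U V openin_subset onto by blast+
  then obtain x y where x: "x \<in> topspace X" "f x \<in> U" and y: "y \<in> topspace X" "f y \<in> V"
    using \<open>u \<in> U\<close> \<open>v \<in> V\<close> by blast
  obtain fs where fs_cont: "\<And>n. continuous_map X Y (fs n)"
    and fs_lim: "\<And>z. z \<in> topspace X \<Longrightarrow> limitin Y (\<lambda>n. fs n z) (f z) sequentially"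
    using f unfolding baire_one_def by blast
  have "eventually (\<lambda>n. fs n x \<in> U) sequentially"
    using fs_lim[OF x(1)] U x(2) unfolding limitin_def by blast
  moreover have "eventually (\<lambda>n. fs n y \<in> V) sequentially"
    using fs_lim[OF y(1)] V y(2) unfolding limitin_def by blast
  ultimately obtain n where "fs n x \<in> U" "fs n y \<in> V"
    using eventually_happens'[OF sequentially_bot eventually_conj] by blast
  moreover have "fs n ` topspace X \<subseteq> U \<or> fs n ` topspace X \<subseteq> V"
    using connected_image_in_one_part[OF conn fs_cont U V disj cover] .
  ultimately show False
    using x(1) y(1) disj by blast
qed

theorem proposition2p4:
  fixes X :: "'a topology" and E :: "'a set"
  assumes "connected_space X"
    and "B1_retract X E"
  shows "connected_space (subtopology X E)"
proof -
  obtain r where E: "E \<subseteq> topspace X" and r: "baire_one X (subtopology X E) r"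
    and fix_E: "\<forall>x\<in>E. r x = x"
    using assms(2) unfolding B1_retract_def by blast
  have "topspace (subtopology X E) \<subseteq> r ` topspace X"
    using E fix_E by (force simp: topspace_subtopology)
  then show ?thesis
    using baire_one_image_connected[OF assms(1) r] by blast
qed

end
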